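(* Fix $\Theta\in\Omega$ with $\mu$, $(Y_i)_{i\ge0}$ as in the setup. Almost surely there exists $i_0\in\mathbb N$ such that for every $i\ge i_0$, $$Y_{i+1}-Y_i\le\frac{5\log Y_i}{\mu[0,Y_i]}.$$
   Context: Let $\Omega$ be the set of sequences $\Theta=(\theta_i)_{i\ge 0}$ of nonnegative reals with $\sum_{i\ge0}\theta_i^2=1$, $\theta_1\ge\theta_2\ge\cdots$, and either $\theta_0\ne0$ or $\sum_{i\ge1}\theta_i=\infty$. For $\Theta\in\Omega$, let $(X_i)_{i\ge1}$ be independent exponential random variables with respective rates $\theta_i$ (a rate-$0$ variable equals $+\infty$), and let $\mu:=\theta_0^2\,dx+\sum_{i\ge1}\theta_i\delta_{X_i}$, a random measure on $\mathbb R^+$ (a.s. $\mu[0,l]<\infty$ for all $l$). Conditionally on $\mu$, let $Y_1<Y_2<\cdots$ be the points of a Poisson point process on $\mathbb R^+$ with intensity $\mu[0,l]\,dl$ (the "cuts"), and set $Y_0:=0$. *)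

theory Defs
  imports "HOL-Probability.Probability"
begin

definition mu_mass :: "(nat \<Rightarrow> real) \<Rightarrow> (nat \<Rightarrow> real) \<Rightarrow> real \<Rightarrow> real" where
  "mu_mass \<theta> x l = \<theta> 0 ^ 2 * l + (\<Sum>i. \<theta> (Suc i) * indicator {..l} (x (Suc i)))"

definition cum_intensity :: "(nat \<Rightarrow> real) \<Rightarrow> (nat \<Rightarrow> real) \<Rightarrow> real \<Rightarrow> real" where
  "cum_intensity \<theta> x t = integral {0..t} (mu_mass \<theta> x)"

text \<open>k-th cut: generalised inverse of Lambda at the k-th point E_0+...+E_(k-1) of a
  rate-one Poisson process; cut 0 = 0.\<close>
definition cut :: "(nat \<Rightarrow> real) \<Rightarrow> (nat \<Rightarrow> real) \<Rightarrow> (nat \<Rightarrow> real) \<Rightarrow> nat \<Rightarrow> real" where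
  "cut \<theta> x e k = Inf {t. 0 \<le> t \<and> (\<Sum>j<k. e j) \<le> cum_intensity \<theta> x t}"

end

(* Put Lambda(t) = int_0^t mu[0,l] dl. The cut Y_k is the first time Lambda reaches
   E_0 + ... + E_(k-1), and since mu[0,.] is nondecreasing, Y_(i+1) - Y_i <= E_i / mu[0,Y_i].
   Almost surely, for all large i: E_i <= (6/5) log i (Borel-Cantelli), E_0 + ... + E_(i-1) >= i/10
   (Hoeffding for the indicators of E_j > 1), and mu[0,t] <= 9 t^3 (Markov, as the expected atom
   mass of [0,l] is at most l). Then i/10 <= Lambda(Y_i) <= Y_i mu[0,Y_i] <= 9 Y_i^4, so
   log i <= 4 log Y_i + log 90, which makes (6/5) log i <= 5 log Y_i eventually. *)

theory Submission
  imports Defs "HOL-Probability.Hoeffding"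
begin

section \<open>Passage times of a nondecreasing intensity\<close>

lemma ln_le_of_le_power4:
  fixes n y :: real
  assumes "90 ^ 25 \<le> n" "n / 90 \<le> y ^ 4" "0 < y"
  shows "6/5 * ln n \<le> 5 * ln y"
proof -
  have "0 < n"
    using assms(1) by (smt (verit) zero_less_power)
  have "ln n - ln 90 \<le> 4 * ln y"
    using ln_mono[OF assms(2)] \<open>0 < n\<close> assms(3) by (simp add: ln_div ln_realpow)
  moreover have "25 * ln 90 \<le> ln n"
    using ln_mono[OF assms(1)] ln_realpow[of 90 25] by simp
  ultimately show ?thesis
    by linarith
qed

locale cumulative_intensity =
  fixes m :: "real \<Rightarrow> real"
  assumes mono: "mono m"
    and nonneg_at_0: "0 \<le> m 0"
    and somewhere_pos: "\<exists>l. 0 < m l"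
begin

definition \<Lambda> :: "real \<Rightarrow> real" where
  "\<Lambda> t = integral {0..t} m"

definition passage_time :: "real \<Rightarrow> real" where
  "passage_time s = Inf {t. 0 \<le> t \<and> s \<le> \<Lambda> t}"

lemma m_nonneg: "0 \<le> l \<Longrightarrow> 0 \<le> m l"
  using mono nonneg_at_0 by (meson monoD order_trans)

lemma m_integrable_on: "m integrable_on {a..b}"
  using mono by (intro integrable_on_mono_on) (meson mono_on_subset subset_UNIV)

lemma \<Lambda>_diff_bounds:
  assumes "0 \<le> a" "a \<le> b"
  shows "(b - a) * m a \<le> \<Lambda> b - \<Lambda> a" "\<Lambda> b - \<Lambda> a \<le> (b - a) * m b"
proof -
  have split: "\<Lambda> b - \<Lambda> a = integral {a..b} m"
    using Henstock_Kurzweil_Integration.integral_combine[OF assms m_integrable_on] by (simp add: \<Lambda>_def)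
  have "integral {a..b} (\<lambda>_. m a) \<le> integral {a..b} m"
    by (rule integral_le) (use m_integrable_on mono in \<open>auto simp: monoD\<close>)
  moreover have "integral {a..b} m \<le> integral {a..b} (\<lambda>_. m b)"
    by (rule integral_le) (use m_integrable_on mono in \<open>auto simp: monoD\<close>)
  ultimately show "(b - a) * m a \<le> \<Lambda> b - \<Lambda> a" "\<Lambda> b - \<Lambda> a \<le> (b - a) * m b"
    using assms by (simp_all add: split)
qed

lemma \<Lambda>_0 [simp]: "\<Lambda> 0 = 0"
  by (simp add: \<Lambda>_def)

lemma \<Lambda>_mono: "0 \<le> a \<Longrightarrow> a \<le> b \<Longrightarrow> \<Lambda> a \<le> \<Lambda> b"
  using \<Lambda>_diff_bounds(1)[of a b] m_nonneg[of a] by (smt (verit) mult_nonneg_nonneg)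

lemma \<Lambda>_le: "0 \<le> t \<Longrightarrow> \<Lambda> t \<le> t * m t"
  using \<Lambda>_diff_bounds(2)[of 0 t] by simp

lemma \<Lambda>_unbounded: "\<exists>t\<ge>0. s \<le> \<Lambda> t"
proof -
  obtain l where "0 < m l"
    using somewhere_pos by blast
  define l0 where "l0 = max 0 l"
  have l0: "0 \<le> l0" "0 < m l0"
    using \<open>0 < m l\<close> mono by (auto simp: l0_def monoD intro: less_le_trans)
  define t where "t = l0 + max 0 s / m l0"
  have "l0 \<le> t"
    using l0 by (simp add: t_def)
  have "max 0 s = (t - l0) * m l0"
    using l0 by (simp add: t_def)
  also have "\<dots> \<le> \<Lambda> t - \<Lambda> l0"
    using \<Lambda>_diff_bounds(1) l0 \<open>l0 \<le> t\<close> by blast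
  also have "\<dots> \<le> \<Lambda> t"
    using \<Lambda>_mono[of 0 l0] l0 by simp
  finally show ?thesis
    using l0 \<open>l0 \<le> t\<close> by (intro exI[of _ t]) auto
qed

lemma passage_time_nonneg: "0 \<le> passage_time s"
  unfolding passage_time_def using \<Lambda>_unbounded by (intro cInf_greatest) auto

lemma passage_time_le: "0 \<le> t \<Longrightarrow> s \<le> \<Lambda> t \<Longrightarrow> passage_time s \<le> t"
  unfolding passage_time_def by (rule cInf_lower) (auto intro: bdd_belowI[of _ 0])

text \<open>The level set is closed because \<open>\<Lambda>\<close> is continuous, so the infimum is attained.\<close>
lemma le_\<Lambda>_passage_time: "s \<le> \<Lambda> (passage_time s)"
proof -
  obtain b where b: "0 \<le> b" "s \<le> \<Lambda> b"
    using \<Lambda>_unbounded by blast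
  define B where "B = {t \<in> {0..b}. s \<le> \<Lambda> t}"
  have "closed B"
    unfolding B_def \<Lambda>_def
    by (intro continuous_on_closed_Collect_le continuous_on_const
        indefinite_integral_continuous_1 m_integrable_on) simp
  then have "Inf B \<in> B"
    using b by (intro closed_contains_Inf) (auto simp: B_def intro: bdd_belowI[of _ 0])
  moreover have "passage_time s = Inf B"
    unfolding passage_time_def
  proof (rule cInf_eq_minimum)
    show "Inf B \<in> {t. 0 \<le> t \<and> s \<le> \<Lambda> t}"
      using \<open>Inf B \<in> B\<close> by (simp add: B_def)
    show "Inf B \<le> t" if "t \<in> {t. 0 \<le> t \<and> s \<le> \<Lambda> t}" for t
    proof (cases "t \<le> b")
      case True
      with that show ?thesis by (intro cInf_lower) (auto simp: B_def intro: bdd_belowI[of _ 0])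
    next
      case False
      with \<open>Inf B \<in> B\<close> show ?thesis by (simp add: B_def)
    qed
  qed
  ultimately show ?thesis
    by (simp add: B_def)
qed

lemma less_passage_time:
  assumes "0 \<le> t" "\<Lambda> t < s"
  shows "t < passage_time s"
proof (rule ccontr)
  assume "\<not> t < passage_time s"
  then have "\<Lambda> (passage_time s) \<le> \<Lambda> t"
    using \<Lambda>_mono passage_time_nonneg by simp
  with le_\<Lambda>_passage_time[of s] assms show False
    by linarith
qed

lemma filterlim_passage_time: "filterlim passage_time at_top at_top"
  unfolding filterlim_at_top
proof
  fix Z :: real
  show "\<forall>\<^sub>F s in at_top. Z \<le> passage_time s"
    using eventually_gt_at_top[of "\<Lambda> (max Z 0)"]
    by eventually_elim (use less_passage_time[of "max Z 0"] in fastforce)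
qed

lemma passage_time_add_le:
  assumes "0 \<le> d" "0 < m (passage_time s)"
  shows "passage_time (s + d) \<le> passage_time s + d / m (passage_time s)"
proof (rule passage_time_le)
  define y where "y = passage_time s"
  have "0 \<le> y" "0 \<le> d / m y"
    using assms passage_time_nonneg by (simp_all add: y_def)
  then show "0 \<le> y + d / m y"
    by simp
  have "d = (y + d / m y - y) * m y"
    using assms by (simp add: y_def)
  also have "\<dots> \<le> \<Lambda> (y + d / m y) - \<Lambda> y"
    by (rule \<Lambda>_diff_bounds(1)) (use \<open>0 \<le> y\<close> \<open>0 \<le> d / m y\<close> in auto)
  finally show "s + d \<le> \<Lambda> (y + d / m y)"
    using le_\<Lambda>_passage_time[of s] by (simp add: y_def)
qed

lemma eventually_passage_time_gap_le:
  fixes e :: "nat \<Rightarrow> real"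
  assumes e_nonneg: "\<And>j. 0 \<le> e j"
    and sum_ge: "\<forall>\<^sub>F n in sequentially. real n / 10 \<le> (\<Sum>j<n. e j)"
    and e_le: "\<forall>\<^sub>F i in sequentially. e i \<le> 6/5 * ln (real i)"
    and m_le: "\<forall>\<^sub>F t in at_top. m t \<le> 9 * t ^ 3"
  defines "Y i \<equiv> passage_time (\<Sum>j<i. e j)"
  shows "\<forall>\<^sub>F i in sequentially. Y (Suc i) - Y i \<le> 5 * ln (Y i) / m (Y i)"
proof -
  have "filterlim (\<lambda>n. 1/10 * real n) at_top sequentially"
    by (rule filterlim_tendsto_pos_mult_at_top[OF tendsto_const _ filterlim_real_sequentially]) simp
  then have "filterlim (\<lambda>n. \<Sum>j<n. e j) at_top sequentially"
    by (rule filterlim_at_top_mono) (use sum_ge in simp)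
  then have Y_lim: "filterlim Y at_top sequentially"
    unfolding Y_def by (rule filterlim_compose[OF filterlim_passage_time])
  have "\<forall>\<^sub>F t in at_top. 1 \<le> t \<and> 0 < m t \<and> m t \<le> 9 * t ^ 3"
  proof -
    obtain l where "0 < m l"
      using somewhere_pos by blast
    have "\<forall>\<^sub>F t in at_top. 0 < m t"
      using eventually_ge_at_top[of l]
      by eventually_elim (meson \<open>0 < m l\<close> less_le_trans monoD mono)
    with m_le eventually_ge_at_top[of 1] show ?thesis
      by eventually_elim simp
  qed
  then have "\<forall>\<^sub>F i in sequentially. 1 \<le> Y i \<and> 0 < m (Y i) \<and> m (Y i) \<le> 9 * Y i ^ 3"
    by (rule eventually_compose_filterlim[OF _ Y_lim])
  moreover have "\<forall>\<^sub>F i in sequentially. (90::real) ^ 25 \<le> real i"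
    using filterlim_real_sequentially by (simp add: filterlim_at_top)
  ultimately show ?thesis
    using sum_ge e_le
  proof eventually_elim
    case (elim i)
    then have "real i / 10 \<le> \<Lambda> (Y i)"
      using le_\<Lambda>_passage_time order_trans unfolding Y_def by blast
    also have "\<dots> \<le> Y i * m (Y i)"
      using \<Lambda>_le elim by simp
    also have "\<dots> \<le> Y i * (9 * Y i ^ 3)"
      using elim by (intro mult_left_mono) auto
    finally have "real i / 90 \<le> Y i ^ 4"
      by (simp add: power_numeral_reduce)
    then have "e i \<le> 5 * ln (Y i)"
      using ln_le_of_le_power4[of "real i" "Y i"] elim by simp
    moreover have "Y (Suc i) \<le> Y i + e i / m (Y i)"
      using passage_time_add_le[OF e_nonneg] elim by (simp add: Y_def)
    ultimately show ?case
      using elim by (smt (verit) divide_right_mono)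
  qed
qed

end

section \<open>Almost sure bounds for exponential variables\<close>

lemma (in prob_space) indep_sets_reindex:
  assumes inj: "inj_on f I" and indep: "indep_sets F (f ` I)"
  shows "indep_sets (F \<circ> f) I"
  unfolding indep_sets_def
proof (intro conjI ballI allI impI)
  show "(F \<circ> f) i \<subseteq> events" if "i \<in> I" for i
    using indep that unfolding indep_sets_def by auto
  fix J A assume J: "J \<subseteq> I" "J \<noteq> {}" "finite J" and A: "A \<in> Pi J (F \<circ> f)"
  have inj_J: "inj_on f J"
    using inj J(1) by (rule inj_on_subset)
  define A' where "A' k = A (the_inv_into J f k)" for k
  have A'f: "A' (f j) = A j" if "j \<in> J" for j
    using the_inv_into_f_f[OF inj_J that] by (simp add: A'_def)
  have "prob (\<Inter>k\<in>f ` J. A' k) = (\<Prod>k\<in>f ` J. prob (A' k))"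
    using J A A'f by (intro indep_setsD[OF indep]) auto
  then show "prob (\<Inter>j\<in>J. A j) = (\<Prod>j\<in>J. prob (A j))"
    using A'f by (simp add: prod.reindex[OF inj_J])
qed

lemma (in prob_space) indep_vars_reindex:
  assumes "inj_on f I" "indep_vars M' X (f ` I)"
  shows "indep_vars (M' \<circ> f) (X \<circ> f) I"
  using assms indep_sets_reindex unfolding indep_vars_def by (auto simp: comp_def)

lemma (in prob_space) AE_eventually_not_in:
  assumes "\<And>n. A n \<in> events" "summable (\<lambda>n. prob (A n))"
  shows "AE \<omega> in M. \<forall>\<^sub>F n in sequentially. \<omega> \<notin> A n"
  using borel_cantelli_AE1[OF assms(1) _ assms(2)] by (simp add: emeasure_eq_measure)

lemma (in prob_space) AE_exponential_nonneg:
  assumes D: "distributed M lborel Z (exponential_density l)"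
  shows "AE \<omega> in M. 0 \<le> Z \<omega>"
proof -
  have "AE x in distr M lborel Z. 0 \<le> x"
    unfolding distributed_distr_eq_density[OF D]
    by (subst AE_density) (auto simp: exponential_density_def)
  then show ?thesis
    using AE_distrD[OF distributed_measurable[OF D]] by simp
qed

lemma (in prob_space) AE_eventually_exponential_le_ln:
  fixes c :: real
  assumes D: "\<And>j. distributed M lborel (E j) (exponential_density 1)" and "1 < c"
  shows "AE \<omega> in M. \<forall>\<^sub>F i in sequentially. E i \<omega> \<le> c * ln (real i)"
proof -
  have [measurable]: "E j \<in> borel_measurable M" for j
    using distributed_measurable[OF D[of j]] by simp
  define A where "A i = {\<omega> \<in> space M. c * ln (real i) < E i \<omega>}" for i
  have A_events: "A i \<in> events" for i
    unfolding A_def by measurable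
  have prob_A: "prob (A i) = real i powr - c" if "1 \<le> i" for i
  proof -
    have "0 \<le> c * ln (real i)"
      using that \<open>1 < c\<close> by simp
    from exponential_distributedD_gt[OF D[of i] this] show ?thesis
      using that by (simp add: A_def powr_def)
  qed
  have "summable (\<lambda>i. prob (A i))"
  proof (rule summable_comparison_test')
    show "summable (\<lambda>i. real i powr - c)"
      using \<open>1 < c\<close> by (subst summable_real_powr_iff) simp
    show "norm (prob (A i)) \<le> real i powr - c" if "1 \<le> i" for i
      using prob_A[OF that] by simp
  qed
  from AE_eventually_not_in[OF A_events this] show ?thesis
    by (simp add: A_def not_less)
qed

text \<open>Each \<open>E j\<close> exceeds 1 with probability \<open>e\<^sup>-\<^sup>1 > 1/3\<close>; Hoeffding's inequality for these
  indicators keeps their count above \<open>n/10\<close> with exponentially small failure probability.\<close>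
lemma (in prob_space) AE_eventually_sum_exponential_ge:
  assumes D: "\<And>j. distributed M lborel (E j) (exponential_density 1)"
    and indep: "indep_vars (\<lambda>_. borel) E UNIV"
  shows "AE \<omega> in M. \<forall>\<^sub>F n in sequentially. real n / 10 \<le> (\<Sum>j<n. E j \<omega>)"
proof -
  have [measurable]: "E j \<in> borel_measurable M" for j
    using distributed_measurable[OF D[of j]] by simp
  define G where "G j \<omega> = (if 1 < E j \<omega> then 1 else 0 :: real)" for j \<omega>
  have indep_G: "indep_vars (\<lambda>_. borel) G UNIV"
    unfolding G_def by (rule indep_vars_compose2[OF indep]) simp
  have expectation_G: "expectation (G j) = exp (-1)" for j
  proof -
    have "expectation (G j) = expectation (indicator {\<omega> \<in> space M. 1 < E j \<omega>})"
      by (rule Bochner_Integration.integral_cong) (auto simp: G_def indicator_def)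
    also have "\<dots> = prob {\<omega> \<in> space M. 1 < E j \<omega>}"
      by (simp add: Int_absorb2)
    also have "\<dots> = exp (-1)"
      using exponential_distributedD_gt[OF D[of j], of 1] by simp
    finally show ?thesis .
  qed
  define A where "A n = {\<omega> \<in> space M. (\<Sum>j<n. G j \<omega>) \<le> (\<Sum>j<n. expectation (G j)) - real n / 5}" for n
  have A_events: "A n \<in> events" for n
    unfolding A_def G_def by measurable
  have prob_A: "prob (A n) \<le> exp (-2/25) ^ n" if "1 \<le> n" for n
  proof -
    interpret Hoeffding_ineq M "{..<n}" G "\<lambda>_. 0" "\<lambda>_. 1" "\<Sum>j<n. expectation (G j)"
      by unfold_locales (auto intro: indep_vars_subset[OF indep_G] simp: G_def)
    have "prob (A n) \<le> exp (- 2 * (real n / 5)\<^sup>2 / real n)"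
      using Hoeffding_ineq_le[of "real n / 5"] that unfolding A_def by simp
    also have "\<dots> = exp (-2/25) ^ n"
      using that by (simp add: exp_of_nat_mult[symmetric] power2_eq_square field_simps)
    finally show ?thesis .
  qed
  have "summable (\<lambda>n. prob (A n))"
  proof (rule summable_comparison_test')
    show "summable (\<lambda>n. exp (-2/25::real) ^ n)"
      by (rule summable_geometric) simp
    show "norm (prob (A n)) \<le> exp (-2/25) ^ n" if "1 \<le> n" for n
      using prob_A[OF that] by simp
  qed
  then have "AE \<omega> in M. \<forall>\<^sub>F n in sequentially. \<omega> \<notin> A n"
    by (rule AE_eventually_not_in[OF A_events])
  moreover have "AE \<omega> in M. \<forall>j. 0 \<le> E j \<omega>"
    by (subst AE_all_countable) (intro allI AE_exponential_nonneg[OF D])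
  ultimately show ?thesis
    using AE_space
  proof eventually_elim
    case (elim \<omega>)
    then have E_nonneg: "\<forall>j. 0 \<le> E j \<omega>" and \<omega>: "\<omega> \<in> space M"
      and tail: "\<forall>\<^sub>F n in sequentially. \<omega> \<notin> A n"
      by auto
    have "exp (-1::real) \<ge> 1/3"
      using exp_le by (simp add: exp_minus field_simps)
    then have mean_bound: "real n / 10 \<le> real n * exp (-1) - real n / 5" for n
      using mult_left_mono[of "1/3" "exp (-1)" "real n"] by simp
    have G_le_E: "(\<Sum>j<n. G j \<omega>) \<le> (\<Sum>j<n. E j \<omega>)" for n
      using E_nonneg by (intro sum_mono) (auto simp: G_def)
    from tail show ?case
    proof eventually_elim
      case (elim n)
      then have "real n * exp (-1) - real n / 5 < (\<Sum>j<n. G j \<omega>)"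
        using \<omega> by (simp add: A_def expectation_G)
      then show ?case
        using mean_bound[of n] G_le_E[of n] by linarith
    qed
  qed
qed

section \<open>The random intensity\<close>

definition atom_mass :: "(nat \<Rightarrow> real) \<Rightarrow> (nat \<Rightarrow> real) \<Rightarrow> real \<Rightarrow> real" where
  "atom_mass \<theta> x l = (\<Sum>i. \<theta> (Suc i) * indicator {..l} (x (Suc i)))"

lemma (in prob_space) nn_integral_atom_le:
  assumes "0 \<le> \<theta>" "0 \<le> l" and D: "0 < \<theta> \<Longrightarrow> distributed M lborel Z (exponential_density \<theta>)"
  shows "(\<integral>\<^sup>+\<omega>. ennreal (\<theta> * indicator {..l} (Z \<omega>)) \<partial>M) \<le> ennreal (l * \<theta> ^ 2)"
proof (cases "0 < \<theta>")
  case True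
  have [measurable]: "Z \<in> borel_measurable M"
    using distributed_measurable[OF D[OF True]] by simp
  have "(\<integral>\<^sup>+\<omega>. ennreal (\<theta> * indicator {..l} (Z \<omega>)) \<partial>M)
      = ennreal \<theta> * emeasure M {\<omega> \<in> space M. Z \<omega> \<le> l}"
    by (subst nn_integral_cmult_indicator[symmetric]) (auto intro!: nn_integral_cong
        simp: indicator_def)
  also have "\<dots> = ennreal (\<theta> * (1 - exp (- l * \<theta>)))"
    using exponential_distributedD_le[OF D[OF True] \<open>0 \<le> l\<close> True] True \<open>0 \<le> l\<close>
    by (simp add: emeasure_eq_measure ennreal_mult)
  also have "\<dots> \<le> ennreal (l * \<theta> ^ 2)"
    using exp_ge_add_one_self[of "- l * \<theta>"] True
    by (intro ennreal_leI) (simp add: power2_eq_square mult_left_mono mult.commute mult.left_commute)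
  finally show ?thesis .
next
  case False
  with \<open>0 \<le> \<theta>\<close> show ?thesis
    by simp
qed

text \<open>Markov's inequality with \<open>E[atom_mass \<theta> X n] \<le> n \<Sum>\<theta>\<^sub>i\<^sup>2\<close> and Borel--Cantelli;
  no independence is needed.\<close>
lemma (in prob_space) AE_eventually_atom_mass_le:
  assumes \<theta>_nonneg: "\<And>i. 0 \<le> \<theta> i" and summable_sq: "summable (\<lambda>i. \<theta> i ^ 2)"
    and D: "\<And>i. 0 < \<theta> (Suc i) \<Longrightarrow>
      distributed M lborel (X (Suc i)) (exponential_density (\<theta> (Suc i)))"
  shows "AE \<omega> in M. \<forall>\<^sub>F n in sequentially.
    summable (\<lambda>i. \<theta> (Suc i) * indicator {..real n} (X (Suc i) \<omega>)) \<and>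
    atom_mass \<theta> (\<lambda>i. X i \<omega>) (real n) \<le> real n ^ 3"
proof -
  define f where "f n i \<omega> = \<theta> (Suc i) * indicator {..real n} (X (Suc i) \<omega>)" for n i \<omega>
  define u where "u n \<omega> = (\<Sum>i. ennreal (f n i \<omega>))" for n \<omega>
  define s where "s = (\<Sum>i. \<theta> (Suc i) ^ 2)"
  have f_nonneg: "0 \<le> f n i \<omega>" for n i \<omega>
    using \<theta>_nonneg by (simp add: f_def)
  have f_measurable [measurable]: "f n i \<in> borel_measurable M" for n i
  proof (cases "0 < \<theta> (Suc i)")
    case True
    have [measurable]: "X (Suc i) \<in> borel_measurable M"
      using distributed_measurable[OF D[OF True]] by simp
    show ?thesis
      unfolding f_def by measurable
  next
    case False
    then have "f n i = (\<lambda>_. 0)"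
      using \<theta>_nonneg[of "Suc i"] by (auto simp: f_def fun_eq_iff)
    then show ?thesis
      by simp
  qed
  have summable_sq_Suc: "summable (\<lambda>i. \<theta> (Suc i) ^ 2)"
    using summable_Suc_iff[of "\<lambda>i. \<theta> i ^ 2"] summable_sq by simp
  have "0 \<le> s"
    unfolding s_def by (intro suminf_nonneg summable_sq_Suc) simp
  have u_integral: "(\<integral>\<^sup>+\<omega>. u n \<omega> \<partial>M) \<le> ennreal (real n * s)" for n
  proof -
    have "(\<integral>\<^sup>+\<omega>. u n \<omega> \<partial>M) = (\<Sum>i. \<integral>\<^sup>+\<omega>. ennreal (f n i \<omega>) \<partial>M)"
      unfolding u_def by (rule nn_integral_suminf) simp
    also have "\<dots> \<le> (\<Sum>i. ennreal (real n * \<theta> (Suc i) ^ 2))"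
      unfolding f_def by (intro suminf_le nn_integral_atom_le \<theta>_nonneg D) auto
    also have "\<dots> = ennreal (real n * s)"
      unfolding s_def using summable_sq_Suc
      by (subst suminf_ennreal2) (auto intro: summable_mult simp: suminf_mult)
    finally show ?thesis .
  qed
  define B where "B n = {\<omega> \<in> space M. 1 \<le> ennreal (1 / real n ^ 3) * u n \<omega>}" for n
  have B_events: "B n \<in> events" for n
    unfolding B_def u_def by measurable
  have prob_B: "prob (B n) \<le> s * inverse (real n ^ 2)" if "1 \<le> n" for n
  proof -
    have "emeasure M (B n) \<le> ennreal (1 / real n ^ 3) * (\<integral>\<^sup>+\<omega>. u n \<omega> * indicator (space M) \<omega> \<partial>M)"
      unfolding B_def using nn_integral_Markov_inequality[of "u n" "space M" M] by (simp add: u_def)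
    also have "(\<integral>\<^sup>+\<omega>. u n \<omega> * indicator (space M) \<omega> \<partial>M) = (\<integral>\<^sup>+\<omega>. u n \<omega> \<partial>M)"
      by (rule nn_integral_cong) simp
    also have "ennreal (1 / real n ^ 3) * \<dots> \<le> ennreal (1 / real n ^ 3) * ennreal (real n * s)"
      by (intro mult_left_mono u_integral) simp
    also have "\<dots> = ennreal (s * inverse (real n ^ 2))"
      using that \<open>0 \<le> s\<close> by (simp add: ennreal_mult[symmetric] power_numeral_reduce field_simps)
    finally show ?thesis
      by (simp add: emeasure_eq_measure \<open>0 \<le> s\<close>)
  qed
  have "summable (\<lambda>n. prob (B n))"
  proof (rule summable_comparison_test')
    show "summable (\<lambda>n. s * inverse (real n ^ 2))"
      by (intro summable_mult inverse_power_summable) simp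
    show "norm (prob (B n)) \<le> s * inverse (real n ^ 2)" if "1 \<le> n" for n
      using prob_B[OF that] by simp
  qed
  then have "AE \<omega> in M. \<forall>\<^sub>F n in sequentially. \<omega> \<notin> B n"
    by (rule AE_eventually_not_in[OF B_events])
  then show ?thesis
    using AE_space
  proof eventually_elim
    case (elim \<omega>)
    from elim(1) eventually_ge_at_top[of 1] show ?case
    proof eventually_elim
      case (elim n)
      then have "ennreal (1 / real n ^ 3) * u n \<omega> < 1"
        using \<open>\<omega> \<in> space M\<close> by (simp add: B_def not_le)
      then have "u n \<omega> \<noteq> \<top>"
        using \<open>1 \<le> n\<close> by (auto simp: ennreal_mult_top)
      then have "summable (\<lambda>i. f n i \<omega>)"
        unfolding u_def by (rule summable_suminf_not_top[OF f_nonneg])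
      moreover have "1 / real n ^ 3 * (\<Sum>i. f n i \<omega>) < 1"
        using \<open>ennreal (1 / real n ^ 3) * u n \<omega> < 1\<close> \<open>summable (\<lambda>i. f n i \<omega>)\<close>
        by (simp add: u_def suminf_ennreal2[OF f_nonneg] suminf_nonneg[OF _ f_nonneg]
            flip: ennreal_mult)
      ultimately show ?case
        using \<open>1 \<le> n\<close> by (simp add: f_def atom_mass_def field_simps)
    qed
  qed
qed

lemma mu_mass_eq: "mu_mass \<theta> x l = \<theta> 0 ^ 2 * l + atom_mass \<theta> x l"
  by (simp add: mu_mass_def atom_mass_def)

lemma summable_atom_terms:
  fixes \<theta> x :: "nat \<Rightarrow> real"
  assumes \<theta>_nonneg: "\<And>i. 0 \<le> \<theta> i"
    and "\<forall>\<^sub>F n in sequentially. summable (\<lambda>i. \<theta> (Suc i) * indicator {..real n} (x (Suc i)))"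
  shows "summable (\<lambda>i. \<theta> (Suc i) * indicator {..l} (x (Suc i)))"
proof -
  obtain n where n: "l \<le> real n" "summable (\<lambda>i. \<theta> (Suc i) * indicator {..real n} (x (Suc i)))"
    using eventually_conj[OF assms(2) eventually_ge_at_top[of "nat \<lceil>l\<rceil>"]]
    by (auto simp: eventually_sequentially)
  show ?thesis
  proof (rule summable_comparison_test')
    show "norm (\<theta> (Suc i) * indicator {..l} (x (Suc i))) \<le> \<theta> (Suc i) * indicator {..real n} (x (Suc i))"
      for i
      using n(1) \<theta>_nonneg[of "Suc i"] by (auto simp: indicator_def)
  qed (rule n(2))
qed

context
  fixes \<theta> x :: "nat \<Rightarrow> real"
  assumes \<theta>_nonneg: "\<And>i. 0 \<le> \<theta> i"
    and summable_terms: "\<And>l. summable (\<lambda>i. \<theta> (Suc i) * indicator {..l} (x (Suc i)))"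
begin

lemma atom_mass_mono: "l \<le> l' \<Longrightarrow> atom_mass \<theta> x l \<le> atom_mass \<theta> x l'"
  unfolding atom_mass_def
  by (intro suminf_le summable_terms) (use \<theta>_nonneg in \<open>auto simp: indicator_def\<close>)

lemma atom_mass_nonneg: "0 \<le> atom_mass \<theta> x l"
  unfolding atom_mass_def by (intro suminf_nonneg summable_terms) (simp add: \<theta>_nonneg)

lemma atom_le_atom_mass: "x (Suc j) \<le> l \<Longrightarrow> \<theta> (Suc j) \<le> atom_mass \<theta> x l"
  using sum_le_suminf[OF summable_terms, of "{j}" l] \<theta>_nonneg
  by (simp add: atom_mass_def)

lemma cumulative_intensity_mu_mass:
  assumes "\<theta> 0 \<noteq> 0 \<or> (\<exists>j. 0 < \<theta> (Suc j))"
  shows "cumulative_intensity (mu_mass \<theta> x)"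
proof
  show "mono (mu_mass \<theta> x)"
    by (rule monoI, unfold mu_mass_eq, intro add_mono mult_left_mono atom_mass_mono) simp_all
  show "0 \<le> mu_mass \<theta> x 0"
    by (simp add: mu_mass_eq atom_mass_nonneg)
  show "\<exists>l. 0 < mu_mass \<theta> x l"
    using assms
  proof
    assume "\<theta> 0 \<noteq> 0"
    then show ?thesis
      using atom_mass_nonneg[of 1] by (intro exI[of _ 1]) (simp add: mu_mass_eq add_pos_nonneg)
  next
    assume "\<exists>j. 0 < \<theta> (Suc j)"
    then obtain j where "0 < \<theta> (Suc j)"
      by blast
    then show ?thesis
      using atom_le_atom_mass[of j "max 0 (x (Suc j))"]
      by (intro exI[of _ "max 0 (x (Suc j))"]) (simp add: mu_mass_eq add_nonneg_pos)
  qed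
qed

lemma eventually_mu_mass_le_cube:
  assumes "\<theta> 0 ^ 2 \<le> 1" and "\<forall>\<^sub>F n in sequentially. atom_mass \<theta> x (real n) \<le> real n ^ 3"
  shows "\<forall>\<^sub>F t in at_top. mu_mass \<theta> x t \<le> 9 * t ^ 3"
proof -
  obtain N where N: "\<And>n. N \<le> n \<Longrightarrow> atom_mass \<theta> x (real n) \<le> real n ^ 3"
    using assms(2) by (auto simp: eventually_sequentially)
  have cube_bound: "mu_mass \<theta> x t \<le> 9 * t ^ 3" if t: "max 1 (real N) \<le> t" for t
  proof -
    define n where "n = nat \<lceil>t\<rceil>"
    have n: "t \<le> real n" "real n \<le> 2 * t" "N \<le> n"
      using t unfolding n_def by linarith+
    have "atom_mass \<theta> x t \<le> real n ^ 3"
      using atom_mass_mono[OF n(1)] N[OF n(3)] by linarith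
    also have "\<dots> \<le> (2 * t) ^ 3"
      using n by (intro power_mono) auto
    finally have "atom_mass \<theta> x t \<le> 8 * t ^ 3"
      by simp
    moreover have "\<theta> 0 ^ 2 * t \<le> t"
      using t assms(1) mult_right_mono[of "\<theta> 0 ^ 2" 1 t] by simp
    moreover have "t \<le> t ^ 3"
      using t power_increasing[of 1 3 t] by simp
    ultimately show ?thesis
      by (simp add: mu_mass_eq)
  qed
  show ?thesis
    unfolding eventually_at_top_linorder by (intro exI[of _ "max 1 (real N)"] allI impI cube_bound)
qed

end

lemma eventually_cut_gap_le:
  fixes \<theta> x e :: "nat \<Rightarrow> real"
  assumes \<theta>_nonneg: "\<And>i. 0 \<le> \<theta> i" and "\<theta> 0 ^ 2 \<le> 1"
    and "\<theta> 0 \<noteq> 0 \<or> (\<exists>j. 0 < \<theta> (Suc j))"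
    and atoms: "\<forall>\<^sub>F n in sequentially.
      summable (\<lambda>i. \<theta> (Suc i) * indicator {..real n} (x (Suc i))) \<and>
      atom_mass \<theta> x (real n) \<le> real n ^ 3"
    and "\<And>j. 0 \<le> e j"
    and "\<forall>\<^sub>F n in sequentially. real n / 10 \<le> (\<Sum>j<n. e j)"
    and "\<forall>\<^sub>F i in sequentially. e i \<le> 6/5 * ln (real i)"
  shows "\<forall>\<^sub>F i in sequentially. cut \<theta> x e (Suc i) - cut \<theta> x e i
    \<le> 5 * ln (cut \<theta> x e i) / mu_mass \<theta> x (cut \<theta> x e i)"
proof -
  have summable_terms: "summable (\<lambda>i. \<theta> (Suc i) * indicator {..l} (x (Suc i)))" for l
    using atoms by (intro summable_atom_terms \<theta>_nonneg) (auto elim: eventually_mono)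
  interpret cumulative_intensity "mu_mass \<theta> x"
    by (rule cumulative_intensity_mu_mass[OF \<theta>_nonneg summable_terms assms(3)])
  have "\<forall>\<^sub>F t in at_top. mu_mass \<theta> x t \<le> 9 * t ^ 3"
    using atoms by (intro eventually_mu_mass_le_cube[OF \<theta>_nonneg summable_terms assms(2)])
      (auto elim: eventually_mono)
  moreover have "cut \<theta> x e k = passage_time (\<Sum>j<k. e j)" for k
    by (simp add: cut_def cum_intensity_def passage_time_def \<Lambda>_def)
  ultimately show ?thesis
    using eventually_passage_time_gap_le[OF assms(5-7)] by simp
qed

lemma nonzero_weight_exists:
  fixes \<theta> :: "nat \<Rightarrow> real"
  assumes "\<And>i. 0 \<le> \<theta> i" "\<theta> 0 \<noteq> 0 \<or> \<not> summable (\<lambda>i. \<theta> (Suc i))"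
  shows "\<theta> 0 \<noteq> 0 \<or> (\<exists>j. 0 < \<theta> (Suc j))"
proof (rule ccontr)
  assume "\<not> ?thesis"
  then have "\<theta> 0 = 0" "(\<lambda>i. \<theta> (Suc i)) = (\<lambda>_. 0)"
    using assms(1) by (auto simp: fun_eq_iff less_le)
  with assms(2) show False
    by simp
qed

theorem mainTheorem11:
  fixes M :: "'a measure" and \<theta> :: "nat \<Rightarrow> real"
    and X :: "nat \<Rightarrow> 'a \<Rightarrow> real" and E :: "nat \<Rightarrow> 'a \<Rightarrow> real"
  assumes "prob_space M"
    and "\<And>i. \<theta> i \<ge> 0"
    and "(\<lambda>i. \<theta> i ^ 2) sums 1"
    and "\<And>i. i \<ge> 1 \<Longrightarrow> \<theta> (Suc i) \<le> \<theta> i"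
    and "\<theta> 0 \<noteq> 0 \<or> \<not> summable (\<lambda>i. \<theta> (Suc i))"
    and "\<And>i. i \<ge> 1 \<Longrightarrow> \<theta> i > 0 \<Longrightarrow> distributed M lborel (X i) (exponential_density (\<theta> i))"
    and "\<And>j. distributed M lborel (E j) (exponential_density 1)"
    and "prob_space.indep_vars M (\<lambda>_. borel)
           (\<lambda>k. case k of Inl i \<Rightarrow> X i | Inr j \<Rightarrow> E j)
           (Inl ` {i. i \<ge> 1 \<and> \<theta> i > 0} \<union> Inr ` UNIV)"
  shows "AE \<omega> in M. \<exists>i0::nat. \<forall>i\<ge>i0.
           cut \<theta> (\<lambda>n. X n \<omega>) (\<lambda>n. E n \<omega>) (Suc i) - cut \<theta> (\<lambda>n. X n \<omega>) (\<lambda>n. E n \<omega>) i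
             \<le> 5 * ln (cut \<theta> (\<lambda>n. X n \<omega>) (\<lambda>n. E n \<omega>) i)
                 / mu_mass \<theta> (\<lambda>n. X n \<omega>) (cut \<theta> (\<lambda>n. X n \<omega>) (\<lambda>n. E n \<omega>) i)"
proof -
  interpret prob_space M
    by (rule assms(1))
  have "\<theta> 0 ^ 2 \<le> 1"
    using sum_le_suminf[OF sums_summable[OF assms(3)], of "{0}"] sums_unique[OF assms(3)] by simp
  note cut_gap = eventually_cut_gap_le[OF assms(2) this nonzero_weight_exists[OF assms(2,5)]]
  have "indep_vars (\<lambda>_. borel) E UNIV"
    using indep_vars_reindex[OF _ indep_vars_subset[OF assms(8)], of Inr UNIV]
    by (simp add: comp_def)
  then have "AE \<omega> in M. \<forall>\<^sub>F n in sequentially. real n / 10 \<le> (\<Sum>j<n. E j \<omega>)"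
    by (rule AE_eventually_sum_exponential_ge[OF assms(7)])
  moreover have "AE \<omega> in M. \<forall>\<^sub>F i in sequentially. E i \<omega> \<le> 6/5 * ln (real i)"
    by (rule AE_eventually_exponential_le_ln[OF assms(7)]) simp
  moreover have "AE \<omega> in M. \<forall>j. 0 \<le> E j \<omega>"
    by (subst AE_all_countable) (intro allI AE_exponential_nonneg[OF assms(7)])
  moreover have "AE \<omega> in M. \<forall>\<^sub>F n in sequentially.
      summable (\<lambda>i. \<theta> (Suc i) * indicator {..real n} (X (Suc i) \<omega>)) \<and>
      atom_mass \<theta> (\<lambda>i. X i \<omega>) (real n) \<le> real n ^ 3"
    by (rule AE_eventually_atom_mass_le[OF assms(2) sums_summable[OF assms(3)] assms(6)]) simp
  ultimately show ?thesis
    by eventually_elim (use cut_gap in \<open>auto simp: eventually_sequentially\<close>)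
qed

end
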